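(* Let $L\ge2$ and let $S=(d,N_1,\dots,N_L)$ be a neural network architecture. Let $\varrho:\mathbb{R}\to\mathbb{R}$ be continuous and assume there is $x_0\in\mathbb{R}$ such that $\varrho$ is differentiable at $x_0$ with $\varrho'(x_0)\ne0$. Let $\Omega\subset\mathbb{R}^d$ have nonempty interior, and assume that $\mathcal{RNN}_\varrho^\Omega(S)$ does not contain infinitely many linearly independent functions. Then $\varrho$ is a polynomial.
   Context: A neural network with architecture $S=(N_0,\dots,N_L)$ ($N_0=d$) is a family $\Phi=((A_\ell,b_\ell))_{\ell=1}^L$, $A_\ell\in\mathbb{R}^{N_\ell\times N_{\ell-1}}$, $b_\ell\in\mathbb{R}^{N_\ell}$; $\mathcal{NN}(S)$ is the set of these. $\mathrm{R}_\varrho^\Omega(\Phi):\Omega\to\mathbb{R}^{N_L}$, $x\mapsto x_L$, where $x_0=x$, $x_\ell=\varrho(A_\ell x_{\ell-1}+b_\ell)$ for $1\le\ell\le L-1$ (componentwise), $x_L=A_Lx_{L-1}+b_L$; $\mathcal{RNN}_\varrho^\Omega(S)=\{\mathrm{R}_\varrho^\Omega(\Phi):\Phi\in\mathcal{NN}(S)\}$. *)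

theory Defs
  imports "HOL-Analysis.Analysis" "HOL-Computational_Algebra.Polynomial"
begin

text \<open>Architecture S = (d, N_1, ..., N_L): the input dimension d is CARD('d) of the
index type of the input space real^'d; Ns = [N_1, ..., N_L], so L = length Ns.
A network is (A_1, b_1, rest) where A_1 :: nat => 'd => real (rows j < N_1),
b_1 :: nat => real, and rest = [(A_2,b_2), ..., (A_L,b_L)] with matrices
indexed nat => nat => real (only entries j < N_l, i < N_(l-1) are used).
Vectors in R^N are represented as nat => real, set to 0 at indices >= N.\<close>

type_synonym 'd network =
  "(nat \<Rightarrow> 'd \<Rightarrow> real) \<times> (nat \<Rightarrow> real) \<times> ((nat \<Rightarrow> nat \<Rightarrow> real) \<times> (nat \<Rightarrow> real)) list"

definition NN :: "nat list \<Rightarrow> ('d::finite) network set" where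
  "NN Ns = {(A1, b1, Phis). length Phis = length Ns - 1}"

text \<open>net_rest rho dims layers z: z is the pre-activation of the current layer,
whose width is the head of dims.\<close>
fun net_rest :: "(real \<Rightarrow> real) \<Rightarrow> nat list \<Rightarrow> ((nat \<Rightarrow> nat \<Rightarrow> real) \<times> (nat \<Rightarrow> real)) list
                  \<Rightarrow> (nat \<Rightarrow> real) \<Rightarrow> (nat \<Rightarrow> real)" where
  "net_rest rho [n] [] z = (\<lambda>j. if j < n then z j else 0)"
| "net_rest rho (n # m # ns) ((A, b) # Phis) z =
     net_rest rho (m # ns) Phis (\<lambda>j. if j < m then (\<Sum>i<n. A j i * rho (z i)) + b j else 0)"
| "net_rest rho _ _ z = (\<lambda>_. 0)"

definition realization :: "(real \<Rightarrow> real) \<Rightarrow> nat list \<Rightarrow> ('d::finite) network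
                            \<Rightarrow> real^'d \<Rightarrow> (nat \<Rightarrow> real)" where
  "realization rho Ns Phi x =
     (case Phi of (A1, b1, Phis) \<Rightarrow>
        net_rest rho Ns Phis
          (\<lambda>j. if j < hd Ns then (\<Sum>i\<in>UNIV. A1 j i * x $ i) + b1 j else 0))"

definition RNN :: "(real \<Rightarrow> real) \<Rightarrow> (real^'d) set \<Rightarrow> nat list
                     \<Rightarrow> (real^('d::finite) \<Rightarrow> (nat \<Rightarrow> real)) set" where
  "RNN rho \<Omega> Ns = {(\<lambda>x. if x \<in> \<Omega> then realization rho Ns Phi x else (\<lambda>_. 0)) | Phi. Phi \<in> NN Ns}"

definition lin_indep_on :: "'a set \<Rightarrow> ('a \<Rightarrow> nat \<Rightarrow> real) set \<Rightarrow> bool" where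
  "lin_indep_on \<Omega> F \<longleftrightarrow>
     (\<forall>G c. finite G \<and> G \<subseteq> F \<and> (\<forall>x\<in>\<Omega>. \<forall>j. (\<Sum>g\<in>G. c g * g x j) = 0)
            \<longrightarrow> (\<forall>g\<in>G. c g = 0))"

end

theory Submission
  imports Defs "HOL-Library.Function_Algebras"
begin

text \<open>If \<open>\<rho>\<close> is not constant, a chain of one-neuron layers turns it into a continuous
  nonconstant \<open>u : \<real>\<^sup>d \<rightarrow> \<real>\<close> such that every ridge function \<open>x \<mapsto> \<rho> (a u(x) + b)\<close> is
  realised by a network. The realisations span a finite-dimensional space, so the evaluations at
  points \<open>x\<^sub>t \<in> \<Omega>\<close> with \<open>u(x\<^sub>t) = t\<close>, for the infinitely many \<open>t \<in> u(\<Omega>)\<close>, are linearly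
  dependent on it: there are finitely many \<open>t\<close> and weights \<open>c\<^sub>t\<close>, not all zero, with
  \<open>\<Sum>\<^sub>t c\<^sub>t \<rho> (a t + b) = 0\<close> for all \<open>a, b\<close>. Integrating this relation shows that \<open>\<rho>\<close> is smooth
  and that all its derivatives satisfy it as well; differentiating in \<open>a\<close> then gives
  \<open>\<Sum>\<^sub>t c\<^sub>t t\<^sup>j D\<^sup>m\<rho> (a t + b) = 0\<close> for \<open>j \<le> m\<close>. Some moment \<open>\<Sum>\<^sub>t c\<^sub>t t\<^sup>j\<close> with \<open>j\<close> below the
  number of points is nonzero, so a derivative of \<open>\<rho>\<close> vanishes identically and \<open>\<rho>\<close> is a
  polynomial by Taylor's theorem.\<close>

section \<open>Continuous solutions of an affine relation are polynomials\<close>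

definition affine_relation :: "real set \<Rightarrow> (real \<Rightarrow> real) \<Rightarrow> (real \<Rightarrow> real) \<Rightarrow> bool" where
  "affine_relation L c f \<longleftrightarrow> (\<forall>a b. (\<Sum>t\<in>L. c t * f (a * t + b)) = 0)"

definition weighted_diff_quotient ::
    "real set \<Rightarrow> (real \<Rightarrow> real) \<Rightarrow> real \<Rightarrow> (real \<Rightarrow> real) \<Rightarrow> real \<Rightarrow> real" where
  "weighted_diff_quotient L c t0 g y =
     - (1 / c t0) * (\<Sum>t\<in>L - {t0}. c t / (t - t0) * (g (y + (t - t0)) - g y))"

lemma continuous_has_antiderivative:
  fixes f :: "real \<Rightarrow> real"
  assumes "continuous_on UNIV f"
  obtains F where "\<And>x. (F has_real_derivative f x) (at x)"
  using einterval_antiderivative[of "-\<infinity>" "\<infinity>" f] assms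
  by (auto simp: has_real_derivative_iff_has_vector_derivative continuous_on_eq_continuous_at)

lemma has_integral_along_segment:
  assumes F: "\<And>x. (F has_real_derivative f x) (at x)" and "h \<noteq> 0"
  shows "((\<lambda>s. f (y + s * h)) has_integral (F (y + h) - F y) / h) {0..1}"
proof -
  have "((\<lambda>s. y + s * h) has_real_derivative h) (at s)" for s
    by (auto intro!: derivative_eq_intros)
  from DERIV_cdivide[OF DERIV_chain2[OF F this], of h]
  have "((\<lambda>s. F (y + s * h) / h) has_real_derivative f (y + s * h)) (at s)" for s
    using \<open>h \<noteq> 0\<close> by simp
  then have "((\<lambda>s. f (y + s * h)) has_integral F (y + 1 * h) / h - F (y + 0 * h) / h) {0..1}"
    by (intro fundamental_theorem_of_calculus)
       (auto simp: has_real_derivative_iff_has_vector_derivative has_vector_derivative_at_within)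
  then show ?thesis
    by (simp add: diff_divide_distrib)
qed

lemma has_real_derivative_weighted_diff_quotient:
  assumes "\<And>x. (g has_real_derivative g' x) (at x)"
  shows "(weighted_diff_quotient L c t0 g has_real_derivative weighted_diff_quotient L c t0 g' y) (at y)"
proof -
  have "((\<lambda>y. y + d) has_real_derivative 1) (at y)" for d
    by (auto intro!: derivative_eq_intros)
  from DERIV_chain2[OF assms this]
  have shifted: "((\<lambda>y. g (y + d)) has_real_derivative g' (y + d)) (at y)" for d
    by simp
  show ?thesis
    unfolding weighted_diff_quotient_def
    by (intro DERIV_cmult DERIV_sum DERIV_diff shifted assms)
qed

text \<open>Integrating the relation along \<open>a \<in> [0, 1]\<close> with \<open>b = y - a t0\<close> expresses \<open>f\<close> through
  difference quotients of an antiderivative, which is the source of all the smoothness of \<open>f\<close>.\<close>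
lemma affine_relation_eq_weighted_diff_quotient:
  assumes fin: "finite L" and t0: "t0 \<in> L" and c0: "c t0 \<noteq> 0"
    and rel: "affine_relation L c f" and F: "\<And>x. (F has_real_derivative f x) (at x)"
  shows "f y = weighted_diff_quotient L c t0 F y"
proof -
  define I where "I t = (if t = t0 then f y else (F (y + (t - t0)) - F y) / (t - t0))" for t
  have "((\<lambda>s. f (y + s * (t - t0))) has_integral I t) {0..1}" for t
    using has_integral_along_segment[OF F, of "t - t0" y] has_integral_const_real[of "f y" 0 1]
    by (cases "t = t0") (auto simp: I_def)
  then have "((\<lambda>s. c t * f (y + s * (t - t0))) has_integral c t * I t) {0..1}" for t
    by (rule has_integral_mult_right)
  then have "((\<lambda>s. \<Sum>t\<in>L. c t * f (y + s * (t - t0))) has_integral (\<Sum>t\<in>L. c t * I t)) {0..1}"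
    by (intro has_integral_sum fin)
  moreover have "(\<lambda>s. \<Sum>t\<in>L. c t * f (y + s * (t - t0))) = (\<lambda>s. 0)"
  proof
    fix s
    have "y + s * (t - t0) = s * t + (y - s * t0)" for t
      by (simp add: algebra_simps)
    then show "(\<Sum>t\<in>L. c t * f (y + s * (t - t0))) = 0"
      using rel unfolding affine_relation_def by presburger
  qed
  ultimately have "(\<Sum>t\<in>L. c t * I t) = 0"
    using has_integral_unique[OF has_integral_0] by simp
  moreover have "(\<Sum>t\<in>L. c t * I t) = c t0 * f y + (\<Sum>t\<in>L - {t0}. c t / (t - t0) * (F (y + (t - t0)) - F y))"
    by (simp add: sum.remove[OF fin t0] I_def)
  ultimately show ?thesis
    using c0 by (simp add: weighted_diff_quotient_def field_simps)
qed

lemma continuous_on_weighted_diff_quotient: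
  assumes "continuous_on UNIV g"
  shows "continuous_on UNIV (weighted_diff_quotient L c t0 g)"
proof -
  have "continuous_on UNIV (\<lambda>y. g (y + d))" for d
    by (rule continuous_on_compose2[OF assms]) (auto intro!: continuous_intros)
  then show ?thesis
    unfolding weighted_diff_quotient_def by (intro continuous_intros assms)
qed

lemma affine_relation_weighted_diff_quotient:
  assumes fin: "finite L" and rel: "affine_relation L c g"
  shows "affine_relation L c (weighted_diff_quotient L c t0 g)"
  unfolding affine_relation_def
proof (intro allI)
  fix a b
  have shifted: "(\<Sum>t\<in>L. c t * (g (a * t + b + d) - g (a * t + b))) = 0" for d
    using rel[unfolded affine_relation_def, rule_format, of a "b + d"]
      rel[unfolded affine_relation_def, rule_format, of a b]
    by (simp add: right_diff_distrib sum_subtractf add.assoc)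
  have "(\<Sum>t\<in>L. c t * weighted_diff_quotient L c t0 g (a * t + b)) =
      - (1 / c t0) * (\<Sum>s\<in>L - {t0}. c s / (s - t0) *
          (\<Sum>t\<in>L. c t * (g (a * t + b + (s - t0)) - g (a * t + b))))"
    unfolding weighted_diff_quotient_def
    by (simp add: sum_distrib_left mult.left_commute sum.swap[of _ L])
  also have "\<dots> = 0"
    by (simp add: shifted)
  finally show "(\<Sum>t\<in>L. c t * weighted_diff_quotient L c t0 g (a * t + b)) = 0" .
qed

lemma affine_relation_has_derivative:
  assumes "finite L" "t0 \<in> L" "c t0 \<noteq> 0" "continuous_on UNIV f" "affine_relation L c f"
  shows "(f has_real_derivative weighted_diff_quotient L c t0 f y) (at y)"
proof -
  obtain F where F: "\<And>x. (F has_real_derivative f x) (at x)"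
    using continuous_has_antiderivative[OF \<open>continuous_on UNIV f\<close>] by blast
  have "f = weighted_diff_quotient L c t0 F"
    using affine_relation_eq_weighted_diff_quotient[OF assms(1-3,5) F] by blast
  then show ?thesis
    using has_real_derivative_weighted_diff_quotient[OF F] by simp
qed

text \<open>Differentiating \<open>\<Sum>t\<in>L. c t * t ^ j * D m (a * t + b) = 0\<close> in \<open>a\<close> raises \<open>j\<close> and \<open>m\<close>
  by one.\<close>
lemma affine_relation_moments:
  fixes D :: "nat \<Rightarrow> real \<Rightarrow> real"
  assumes rel: "\<And>m. affine_relation L c (D m)"
    and deriv: "\<And>m y. (D m has_real_derivative D (Suc m) y) (at y)"
    and "j \<le> m"
  shows "(\<Sum>t\<in>L. c t * t ^ j * D m (a * t + b)) = 0"
  using \<open>j \<le> m\<close>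
proof (induction j arbitrary: m a)
  case 0
  then show ?case
    using rel[of m] unfolding affine_relation_def by simp
next
  case (Suc j)
  then obtain m' where m: "m = Suc m'" and "j \<le> m'"
    by (cases m) auto
  have "((\<lambda>a. a * t + b) has_real_derivative t) (at a)" for t
    by (auto intro!: derivative_eq_intros)
  from DERIV_chain2[OF deriv this]
  have "((\<lambda>a. D m' (a * t + b)) has_real_derivative D m (a * t + b) * t) (at a)" for t
    unfolding m by simp
  then have "((\<lambda>a. \<Sum>t\<in>L. c t * t ^ j * D m' (a * t + b)) has_real_derivative
      (\<Sum>t\<in>L. c t * t ^ j * (D m (a * t + b) * t))) (at a)"
    by (intro DERIV_sum DERIV_cmult)
  moreover have "((\<lambda>a. \<Sum>t\<in>L. c t * t ^ j * D m' (a * t + b)) has_real_derivative 0) (at a)"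
    using Suc.IH[OF \<open>j \<le> m'\<close>] by simp
  ultimately have "(\<Sum>t\<in>L. c t * t ^ j * (D m (a * t + b) * t)) = 0"
    by (rule DERIV_unique)
  then show ?case
    by (simp add: algebra_simps)
qed

text \<open>The witness is the polynomial \<open>\<Prod>s\<in>L - {t0}. (X - s)\<close>: it is annihilated by all vanishing
  moments, but pairs with \<open>c\<close> to \<open>c t0 * \<Prod>s\<in>L - {t0}. (t0 - s) \<noteq> 0\<close>.\<close>
lemma exists_nonvanishing_moment:
  fixes c :: "real \<Rightarrow> real"
  assumes fin: "finite L" and t0: "t0 \<in> L" and c0: "c t0 \<noteq> 0"
  shows "\<exists>j < card L. (\<Sum>t\<in>L. c t * t ^ j) \<noteq> 0"
proof (rule ccontr)
  assume "\<not> ?thesis"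
  then have moments: "\<And>j. j < card L \<Longrightarrow> (\<Sum>t\<in>L. c t * t ^ j) = 0"
    by blast
  define q :: "real poly" where "q = (\<Prod>s\<in>L - {t0}. [:- s, 1:])"
  have "degree q \<le> card (L - {t0})"
    using degree_prod_sum_le[of "L - {t0}" "\<lambda>s. [:- s, 1:]"] fin by (simp add: q_def)
  then have deg: "degree q < card L"
    using fin t0 card_Diff1_less by fastforce
  have "(\<Sum>t\<in>L. c t * poly q t) = (\<Sum>i\<le>degree q. coeff q i * (\<Sum>t\<in>L. c t * t ^ i))"
    by (simp add: poly_altdef sum_distrib_left sum.swap[of _ L] mult_ac)
  also have "\<dots> = 0"
    using deg by (simp add: moments)
  finally have "(\<Sum>t\<in>L. c t * poly q t) = 0" .
  moreover have "(\<Sum>t\<in>L. c t * poly q t) = c t0 * poly q t0"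
  proof -
    have "poly q t = 0" if "t \<in> L - {t0}" for t
      using that fin by (auto simp: q_def poly_prod)
    then show ?thesis
      using fin t0 by (simp add: sum.remove)
  qed
  moreover have "poly q t0 \<noteq> 0"
    using fin by (simp add: q_def poly_prod)
  ultimately show False
    using c0 by simp
qed

lemma polynomial_if_higher_derivative_vanishes:
  fixes D :: "nat \<Rightarrow> real \<Rightarrow> real"
  assumes deriv: "\<And>m x. (D m has_real_derivative D (Suc m) x) (at x)" and "D M = (\<lambda>_. 0)"
  shows "\<exists>p :: real poly. \<forall>x. D 0 x = poly p x"
proof -
  define p :: "real poly" where "p = (\<Sum>m<M. monom (D m 0 / fact m) m)"
  have "D 0 x = poly p x" for x
    using Maclaurin_all_le[of D "D 0" x M] deriv \<open>D M = (\<lambda>_. 0)\<close>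
    by (auto simp: p_def poly_sum poly_monom)
  then show ?thesis
    by blast
qed

lemma affine_relation_imp_polynomial:
  fixes f c :: "real \<Rightarrow> real"
  assumes fin: "finite L" and t0: "t0 \<in> L" and c0: "c t0 \<noteq> 0"
    and cont: "continuous_on UNIV f" and rel: "affine_relation L c f"
  shows "\<exists>p :: real poly. \<forall>x. f x = poly p x"
proof -
  define D where "D m = (weighted_diff_quotient L c t0 ^^ m) f" for m
  have D: "continuous_on UNIV (D m) \<and> affine_relation L c (D m)" for m
    by (induction m) (simp_all add: D_def cont rel fin
        continuous_on_weighted_diff_quotient affine_relation_weighted_diff_quotient)
  have deriv: "(D m has_real_derivative D (Suc m) y) (at y)" for m y
    using affine_relation_has_derivative[of L t0 c, OF fin t0 c0] D by (simp add: D_def)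
  obtain j where "j < card L" and moment: "(\<Sum>t\<in>L. c t * t ^ j) \<noteq> 0"
    using exists_nonvanishing_moment[of L t0 c, OF fin t0 c0] by blast
  have "(\<Sum>t\<in>L. c t * t ^ j) * D (card L) b = 0" for b
    using affine_relation_moments[of L c D, OF _ deriv, of j "card L" 0 b] D \<open>j < card L\<close>
    by (simp add: sum_distrib_right)
  then have "D (card L) = (\<lambda>_. 0)"
    using moment by auto
  then show ?thesis
    using polynomial_if_higher_derivative_vanishes[of D, OF deriv] by (simp add: D_def)
qed

section \<open>Relations among linear functionals on a set of finite rank\<close>

instantiation "fun" :: (type, real_vector) real_vector
begin

definition scaleR_fun :: "real \<Rightarrow> ('a \<Rightarrow> 'b) \<Rightarrow> 'a \<Rightarrow> 'b" where
  "scaleR_fun r f = (\<lambda>x. r *\<^sub>R f x)"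

instance
  by standard (simp_all add: scaleR_fun_def fun_eq_iff scaleR_add_right scaleR_add_left)

end

lemma scaleR_fun_apply [simp]: "(r *\<^sub>R f) x = r *\<^sub>R f x"
  by (simp add: scaleR_fun_def)

lemma sum_fun_apply: "(\<Sum>a\<in>A. f a) x = (\<Sum>a\<in>A. f a x)"
  by (induction A rule: infinite_finite_induct) auto

lemma infinite_family_in_finite_span_relation:
  fixes \<psi> :: "'t \<Rightarrow> 'a::real_vector"
  assumes "finite S" and "\<psi> ` T \<subseteq> span S" and "infinite T"
  obtains \<Lambda> c where "finite \<Lambda>" "\<Lambda> \<subseteq> T" "\<exists>t\<in>\<Lambda>. c t \<noteq> 0" "(\<Sum>t\<in>\<Lambda>. c t *\<^sub>R \<psi> t) = 0"
proof (cases "inj_on \<psi> T")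
  case True
  then have "infinite (\<psi> ` T)"
    using \<open>infinite T\<close> finite_imageD by blast
  then have "dependent (\<psi> ` T)"
    using independent_span_bound[OF \<open>finite S\<close> _ \<open>\<psi> ` T \<subseteq> span S\<close>] by blast
  then obtain U u where U: "finite U" "U \<subseteq> \<psi> ` T" "\<exists>v\<in>U. u v \<noteq> 0" "(\<Sum>v\<in>U. u v *\<^sub>R v) = 0"
    unfolding dependent_explicit by blast
  define \<Lambda> where "\<Lambda> = {t \<in> T. \<psi> t \<in> U}"
  have U_eq: "U = \<psi> ` \<Lambda>" and inj: "inj_on \<psi> \<Lambda>"
    using U(2) inj_on_subset[OF True] by (auto simp: \<Lambda>_def)
  show ?thesis
  proof (rule that[of \<Lambda> "u \<circ> \<psi>"])
    show "finite \<Lambda>"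
      using U(1) U_eq inj finite_imageD by blast
    show "\<exists>t\<in>\<Lambda>. (u \<circ> \<psi>) t \<noteq> 0"
      using U(3) U_eq by auto
    show "(\<Sum>t\<in>\<Lambda>. (u \<circ> \<psi>) t *\<^sub>R \<psi> t) = 0"
      using U(4) by (simp add: U_eq sum.reindex[OF inj])
  qed (auto simp: \<Lambda>_def)
next
  case False
  then obtain s t where "s \<in> T" "t \<in> T" "s \<noteq> t" "\<psi> s = \<psi> t"
    unfolding inj_on_def by blast
  then show ?thesis
    by (intro that[of "{s, t}" "\<lambda>x. if x = s then 1 else -1"]) auto
qed

lemma finite_rank_functional_relation:
  fixes V :: "'v::real_vector set" and \<phi> :: "'t \<Rightarrow> 'v \<Rightarrow> real"
  assumes lin: "\<And>t. linear (\<phi> t)"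
    and fin: "\<And>B. B \<subseteq> V \<Longrightarrow> independent B \<Longrightarrow> finite B"
    and "infinite T"
  obtains \<Lambda> c where "finite \<Lambda>" "\<Lambda> \<subseteq> T" "\<exists>t\<in>\<Lambda>. c t \<noteq> 0"
    "\<And>v. v \<in> V \<Longrightarrow> (\<Sum>t\<in>\<Lambda>. c t * \<phi> t v) = 0"
proof -
  obtain B where B: "B \<subseteq> V" "independent B" "V \<subseteq> span B"
    using maximal_independent_subset[of V] by blast
  have "finite B"
    using fin B by blast
  define \<delta> :: "'v \<Rightarrow> 'v \<Rightarrow> real" where "\<delta> v = (\<lambda>w. if w = v then 1 else 0)" for v
  \<comment> \<open>\<open>\<psi> t\<close> records \<open>\<phi> t\<close> on the finite basis \<open>B\<close>, so all \<open>\<psi> t\<close> lie in a space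
    of dimension \<open>card B\<close>.\<close>
  define \<psi> :: "'t \<Rightarrow> 'v \<Rightarrow> real" where "\<psi> t = (\<lambda>v. if v \<in> B then \<phi> t v else 0)" for t
  have \<psi>_sum: "\<psi> t = (\<Sum>v\<in>B. \<phi> t v *\<^sub>R \<delta> v)" for t
  proof
    fix w
    have "(\<Sum>v\<in>B. \<phi> t v *\<^sub>R \<delta> v) w = (\<Sum>v\<in>B. if w = v then \<phi> t v else 0)"
      unfolding sum_fun_apply \<delta>_def by (auto intro: sum.cong)
    then show "\<psi> t w = (\<Sum>v\<in>B. \<phi> t v *\<^sub>R \<delta> v) w"
      using \<open>finite B\<close> by (simp add: \<psi>_def)
  qed
  have "\<psi> t \<in> span (\<delta> ` B)" for t
    unfolding \<psi>_sum by (intro span_sum span_scale span_base imageI)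
  then have "\<psi> ` T \<subseteq> span (\<delta> ` B)"
    by blast
  from infinite_family_in_finite_span_relation[OF finite_imageI[OF \<open>finite B\<close>] this \<open>infinite T\<close>]
  obtain \<Lambda> c where \<Lambda>: "finite \<Lambda>" "\<Lambda> \<subseteq> T" "\<exists>t\<in>\<Lambda>. c t \<noteq> 0"
      and rel: "(\<Sum>t\<in>\<Lambda>. c t *\<^sub>R \<psi> t) = 0" .
  have "(\<Sum>t\<in>\<Lambda>. c t * \<phi> t v) = 0" if "v \<in> B" for v
    using fun_cong[OF rel, of v] that by (simp add: sum_fun_apply \<psi>_def)
  moreover have "linear (\<lambda>v. \<Sum>t\<in>\<Lambda>. c t * \<phi> t v)"
    using linear_compose_scale_right[OF lin] by (intro linear_compose_sum) simp
  ultimately have "(\<Sum>t\<in>\<Lambda>. c t * \<phi> t v) = 0" if "v \<in> V" for v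
    using linear_eq_0_on_span[of "\<lambda>v. \<Sum>t\<in>\<Lambda>. c t * \<phi> t v" B v] B(3) that by blast
  with \<Lambda> show ?thesis
    by (rule that)
qed

lemma independent_imp_lin_indep_on:
  fixes F :: "('a \<Rightarrow> nat \<Rightarrow> real) set"
  assumes "independent F" and vanish: "\<And>g x. g \<in> F \<Longrightarrow> x \<notin> \<Omega> \<Longrightarrow> g x = 0"
  shows "lin_indep_on \<Omega> F"
  unfolding lin_indep_on_def
proof (intro allI impI)
  fix G c
  assume G: "finite G \<and> G \<subseteq> F \<and> (\<forall>x\<in>\<Omega>. \<forall>j. (\<Sum>g\<in>G. c g * g x j) = 0)"
  have "(\<Sum>g\<in>G. c g *\<^sub>R g) x j = 0" for x j
    using G vanish by (cases "x \<in> \<Omega>") (auto simp: sum_fun_apply intro!: sum.neutral)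
  then have "(\<Sum>g\<in>G. c g *\<^sub>R g) = 0"
    by (auto simp: fun_eq_iff)
  then show "\<forall>g\<in>G. c g = 0"
    using \<open>independent F\<close> G unfolding independent_explicit_finite_subsets by blast
qed

section \<open>Networks with one active neuron per layer\<close>

fun scalar_chain :: "(real \<Rightarrow> real) \<Rightarrow> (real \<times> real) list \<Rightarrow> real \<Rightarrow> real" where
  "scalar_chain rho [] v = v"
| "scalar_chain rho ((a, b) # ps) v = scalar_chain rho ps (a * rho v + b)"

definition scalar_layer :: "real \<Rightarrow> real \<Rightarrow> (nat \<Rightarrow> nat \<Rightarrow> real) \<times> (nat \<Rightarrow> real)" where
  "scalar_layer a b = ((\<lambda>j i. if j = 0 \<and> i = 0 then a else 0), (\<lambda>j. if j = 0 then b else 0))"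

definition scalar_network :: "'d \<Rightarrow> real \<Rightarrow> real \<Rightarrow> (real \<times> real) list \<Rightarrow> ('d::finite) network" where
  "scalar_network i a b ps =
     ((\<lambda>j k. if j = 0 \<and> k = i then a else 0), (\<lambda>j. if j = 0 then b else 0),
      map (\<lambda>(a, b). scalar_layer a b) ps @ [scalar_layer 1 0])"

lemma scalar_chain_append: "scalar_chain rho (ps @ [(a, b)]) v = a * rho (scalar_chain rho ps v) + b"
  by (induction ps arbitrary: v) auto

lemma scalar_chain_fixpoint:
  assumes "a * rho p + b = p"
  shows "scalar_chain rho (replicate m (a, b)) p = p"
  using assms by (induction m) auto

lemma continuous_on_scalar_chain:
  assumes "continuous_on UNIV rho"
  shows "continuous_on UNIV (scalar_chain rho ps)"
proof (induction ps)
  case Nil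
  then show ?case
    by (simp add: continuous_on_id')
next
  case (Cons p ps)
  obtain a b where p: "p = (a, b)"
    by fastforce
  have "continuous_on UNIV (\<lambda>v. scalar_chain rho ps (a * rho v + b))"
    by (rule continuous_on_compose2[OF Cons.IH]) (auto intro!: continuous_intros assms)
  then show ?case
    by (simp add: p)
qed

lemma affine_interpolation:
  fixes s s' p q :: real
  assumes "s \<noteq> s'"
  obtains a b where "a * s + b = p" "a * s' + b = q"
proof
  define a where "a = (p - q) / (s - s')"
  show "a * s + (p - a * s) = p"
    by simp
  have "a * (s - s') = p - q"
    using assms by (simp add: a_def)
  then show "a * s' + (p - a * s) = q"
    unfolding right_diff_distrib by linarith
qed

lemma net_rest_scalar_layer:
  assumes "0 < n" and "0 < m"
  shows "net_rest rho (n # m # ns) (scalar_layer a b # Phis) z =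
    net_rest rho (m # ns) Phis (\<lambda>j. if j = 0 then a * rho (z 0) + b else 0)"
proof -
  have "(\<Sum>i<n. (if i = 0 then a else 0) * rho (z i)) = a * rho (z 0)"
    using \<open>0 < n\<close> by (simp add: if_distrib[of "\<lambda>w. w * _"] cong: if_cong)
  then have "(\<lambda>j. if j < m then (\<Sum>i<n. (if j = 0 \<and> i = 0 then a else 0) * rho (z i))
      + (if j = 0 then b else 0) else 0) = (\<lambda>j. if j = 0 then a * rho (z 0) + b else 0)"
    using \<open>0 < m\<close> by (auto simp: fun_eq_iff)
  then show ?thesis
    by (simp add: scalar_layer_def)
qed

lemma net_rest_scalar_layers:
  assumes "length ns = Suc (length ps)" and "\<forall>k\<in>set (n # ns). 0 < k"
  shows "net_rest rho (n # ns) (map (\<lambda>(a, b). scalar_layer a b) ps @ [scalar_layer 1 0]) z =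
    (\<lambda>j. if j = 0 then rho (scalar_chain rho ps (z 0)) else 0)"
  using assms
proof (induction ps arbitrary: n ns z)
  case Nil
  then obtain m where "ns = [m]" "0 < n" "0 < m"
    by (cases ns) auto
  then show ?case
    by (auto simp: net_rest_scalar_layer)
next
  case (Cons p ps)
  obtain a b where p: "p = (a, b)"
    by fastforce
  from Cons.prems obtain m ns' where "ns = m # ns'" "0 < n" "0 < m"
    by (cases ns) auto
  with Cons.IH[of ns' m] Cons.prems show ?case
    by (simp add: p net_rest_scalar_layer cong: if_cong)
qed

lemma scalar_network_NN: "length Ns = length ps + 2 \<Longrightarrow> scalar_network i a b ps \<in> NN Ns"
  by (simp add: NN_def scalar_network_def)

lemma realization_scalar_network:
  fixes i :: "'d::finite"
  assumes "length Ns = length ps + 2" and "\<forall>k\<in>set Ns. 0 < k"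
  shows "realization rho Ns (scalar_network i a b ps) x =
    (\<lambda>j. if j = 0 then rho (scalar_chain rho ps (a * x $ i + b)) else 0)"
proof -
  obtain n ns where Ns: "Ns = n # ns" and "0 < n"
    using assms by (cases Ns) auto
  define z where "z = (\<lambda>j. if j < n then (\<Sum>k\<in>UNIV. (if j = 0 \<and> k = i then a else 0) * x $ k)
    + (if j = 0 then b else 0) else 0)"
  have "(\<Sum>k\<in>UNIV. (if k = i then a else 0) * x $ k) = a * x $ i"
    by (simp add: if_distrib[of "\<lambda>w. w * _"] cong: if_cong)
  then have "z 0 = a * x $ i + b"
    using \<open>0 < n\<close> by (simp add: z_def)
  moreover have "realization rho Ns (scalar_network i a b ps) x =
      net_rest rho (n # ns) (map (\<lambda>(a, b). scalar_layer a b) ps @ [scalar_layer 1 0]) z"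
    by (simp add: realization_def scalar_network_def Ns z_def)
  ultimately show ?thesis
    using net_rest_scalar_layers[of ns ps n rho z] assms by (simp add: Ns cong: if_cong)
qed

lemma RNN_scalar_network:
  fixes i :: "'d::finite" and \<Omega> :: "(real^'d) set"
  assumes "length Ns = length ps + 2" and "\<forall>k\<in>set Ns. 0 < k"
  shows "(\<lambda>x. if x \<in> \<Omega> then (\<lambda>j. if j = 0 then rho (scalar_chain rho ps (a * x $ i + b)) else 0)
      else (\<lambda>_. 0)) \<in> RNN rho \<Omega> Ns"
  unfolding RNN_def
proof (intro CollectI exI conjI)
  show "scalar_network i a b ps \<in> NN Ns"
    by (rule scalar_network_NN[OF assms(1)])
  show "(\<lambda>x. if x \<in> \<Omega> then (\<lambda>j. if j = 0 then rho (scalar_chain rho ps (a * x $ i + b)) else 0)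
      else (\<lambda>_. 0)) =
    (\<lambda>x. if x \<in> \<Omega> then realization rho Ns (scalar_network i a b ps) x else (\<lambda>_. 0))"
    by (simp add: realization_scalar_network[OF assms] cong: if_cong)
qed

definition ridge_fun ::
    "(real^'d) set \<Rightarrow> (real \<Rightarrow> real) \<Rightarrow> (real^'d \<Rightarrow> real) \<Rightarrow> real \<Rightarrow> real \<Rightarrow> real^'d \<Rightarrow> nat \<Rightarrow> real"
  where "ridge_fun \<Omega> rho u a b =
    (\<lambda>x. if x \<in> \<Omega> then (\<lambda>j. if j = 0 then rho (a * u x + b) else 0) else (\<lambda>_. 0))"

lemma RNN_ridge_fun_coordinate:
  assumes "length Ns = 2" and "\<forall>k\<in>set Ns. 0 < k"
  shows "ridge_fun \<Omega> rho (\<lambda>x. x $ i) a b \<in> RNN rho \<Omega> Ns"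
proof -
  have "length Ns = length ([] :: (real \<times> real) list) + 2"
    using assms(1) by simp
  from RNN_scalar_network[OF this assms(2), where \<Omega> = \<Omega> and rho = rho and i = i and a = a and b = b]
  show ?thesis
    by (simp add: ridge_fun_def cong: if_cong)
qed

lemma RNN_ridge_fun_scalar_chain:
  assumes "length Ns = length ps + 3" and "\<forall>k\<in>set Ns. 0 < k"
  shows "ridge_fun \<Omega> rho (\<lambda>x. rho (scalar_chain rho ps (a1 * x $ i + b1))) a b \<in> RNN rho \<Omega> Ns"
proof -
  have "length Ns = length (ps @ [(a, b)]) + 2"
    using assms(1) by simp
  from RNN_scalar_network[OF this assms(2), where \<Omega> = \<Omega> and rho = rho and i = i and a = a1 and b = b1]
  show ?thesis
    by (simp add: ridge_fun_def scalar_chain_append cong: if_cong)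
qed

lemma RNN_ridge_funs:
  fixes x1 x2 :: "real^'d::finite" and \<Omega> :: "(real^'d) set"
  assumes len: "length Ns \<ge> 2" and pos: "\<forall>k\<in>set Ns. 0 < k" and cont: "continuous_on UNIV rho"
    and "rho p \<noteq> rho q" and "x1 \<noteq> x2"
  obtains u where "continuous_on UNIV u" "u x1 \<noteq> u x2" "\<And>a b. ridge_fun \<Omega> rho u a b \<in> RNN rho \<Omega> Ns"
proof -
  obtain i where i: "x1 $ i \<noteq> x2 $ i"
    using \<open>x1 \<noteq> x2\<close> by (auto simp: vec_eq_iff)
  show ?thesis
  proof (cases "length Ns = 2")
    case True
    with i show ?thesis
      by (intro that[of "\<lambda>x. x $ i"] RNN_ridge_fun_coordinate pos) (auto intro: continuous_intros)
  next
    case False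
    obtain \<alpha> \<beta> where "\<alpha> * rho p + \<beta> = p" "\<alpha> * rho q + \<beta> = q"
      using affine_interpolation[OF \<open>rho p \<noteq> rho q\<close>] by metis
    moreover obtain a1 b1 where "a1 * x1 $ i + b1 = p" "a1 * x2 $ i + b1 = q"
      using affine_interpolation[OF i] by metis
    \<comment> \<open>The hidden layers fix \<open>p\<close> and \<open>q\<close>, so the feature below separates \<open>x1\<close> and
      \<open>x2\<close> as \<open>rho\<close> separates \<open>p\<close> and \<open>q\<close>.\<close>
    moreover define ps where "ps = replicate (length Ns - 3) (\<alpha>, \<beta>)"
    ultimately have separates: "rho (scalar_chain rho ps (a1 * x1 $ i + b1)) \<noteq>
        rho (scalar_chain rho ps (a1 * x2 $ i + b1))"
      using \<open>rho p \<noteq> rho q\<close> by (simp add: scalar_chain_fixpoint)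
    show ?thesis
    proof (rule that[OF _ separates])
      show "continuous_on UNIV (\<lambda>x. rho (scalar_chain rho ps (a1 * x $ i + b1)))"
        by (intro continuous_on_compose2[OF cont]
            continuous_on_compose2[OF continuous_on_scalar_chain[OF cont]])
           (auto intro!: continuous_intros)
      show "ridge_fun \<Omega> rho (\<lambda>x. rho (scalar_chain rho ps (a1 * x $ i + b1))) a b
          \<in> RNN rho \<Omega> Ns" for a b
        by (rule RNN_ridge_fun_scalar_chain[OF _ pos]) (use len False in \<open>simp add: ps_def\<close>)
    qed
  qed
qed

lemma infinite_image_connected:
  fixes u :: "'a::topological_space \<Rightarrow> 'b::metric_space"
  assumes "connected S" "continuous_on S u" "x \<in> S" "y \<in> S" "u x \<noteq> u y"
  shows "infinite (u ` S)"
proof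
  assume "finite (u ` S)"
  then obtain z where "u ` S = {z}"
    using connected_finite_iff_sing[OF connected_continuous_image[OF assms(2,1)]] assms(3) by blast
  then show False
    using assms(3-5) by (metis imageI singletonD)
qed

lemma RNN_ridge_funs_infinite_range:
  fixes rho :: "real \<Rightarrow> real" and \<Omega> :: "(real^'d::finite) set"
  assumes "length Ns \<ge> 2" "\<forall>k\<in>set Ns. 0 < k" "continuous_on UNIV rho" "rho p \<noteq> rho q"
    and "interior \<Omega> \<noteq> {}"
  obtains u where "infinite (u ` \<Omega>)" "\<And>a b. ridge_fun \<Omega> rho u a b \<in> RNN rho \<Omega> Ns"
proof -
  obtain x1 r where "r > 0" and ball: "ball x1 r \<subseteq> \<Omega>"
    using \<open>interior \<Omega> \<noteq> {}\<close> mem_interior by blast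
  moreover have "ball x1 r \<noteq> {x1}"
    using not_open_singleton[of x1] by (metis open_ball)
  ultimately obtain x2 where x2: "x2 \<in> ball x1 r" "x2 \<noteq> x1"
    using centre_in_ball by blast
  obtain u where u: "continuous_on UNIV u" "u x1 \<noteq> u x2"
    and ridge: "\<And>a b. ridge_fun \<Omega> rho u a b \<in> RNN rho \<Omega> Ns"
    by (rule RNN_ridge_funs[where \<Omega> = \<Omega>, OF assms(1-4) x2(2)[symmetric]]) blast
  have "infinite (u ` ball x1 r)"
    using infinite_image_connected[OF connected_ball continuous_on_subset[OF u(1)] _ x2(1) u(2)]
      \<open>r > 0\<close> by simp
  then have "infinite (u ` \<Omega>)"
    using finite_subset[OF image_mono[OF ball]] by blast
  then show ?thesis
    using ridge that by blast
qed

section \<open>Finite rank forces an affine relation on the activation\<close>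

lemma RNN_vanishes_outside: "g \<in> RNN rho \<Omega> Ns \<Longrightarrow> x \<notin> \<Omega> \<Longrightarrow> g x = 0"
  by (auto simp: RNN_def zero_fun_def)

lemma finite_rank_RNN_imp_affine_relation:
  fixes rho :: "real \<Rightarrow> real" and \<Omega> :: "(real^'d::finite) set"
  assumes "length Ns \<ge> 2" "\<forall>k\<in>set Ns. 0 < k" "continuous_on UNIV rho" "rho p \<noteq> rho q"
    and "interior \<Omega> \<noteq> {}"
    and finite_rank: "\<not> (\<exists>F. F \<subseteq> RNN rho \<Omega> Ns \<and> infinite F \<and> lin_indep_on \<Omega> F)"
  obtains L c t0 where "finite L" "t0 \<in> L" "c t0 \<noteq> 0" "affine_relation L c rho"
proof -
  obtain u where "infinite (u ` \<Omega>)" and ridge: "\<And>a b. ridge_fun \<Omega> rho u a b \<in> RNN rho \<Omega> Ns"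
    by (rule RNN_ridge_funs_infinite_range[OF assms(1-5)]) blast
  have "\<forall>t\<in>u ` \<Omega>. \<exists>x\<in>\<Omega>. u x = t"
    by blast
  then obtain xp where xp: "\<And>t. t \<in> u ` \<Omega> \<Longrightarrow> xp t \<in> \<Omega> \<and> u (xp t) = t"
    by metis
  have fin: "finite B" if "B \<subseteq> RNN rho \<Omega> Ns" "independent B" for B
  proof -
    have "lin_indep_on \<Omega> B"
      by (rule independent_imp_lin_indep_on[OF \<open>independent B\<close>]) (use that(1) RNN_vanishes_outside in blast)
    then show ?thesis
      using finite_rank that(1) by blast
  qed
  have lin: "linear (\<lambda>g :: real^'d \<Rightarrow> nat \<Rightarrow> real. g (xp t) 0)" for t
    by (simp add: linearI)
  from finite_rank_functional_relation[where \<phi> = "\<lambda>t g. g (xp t) 0", OF lin fin \<open>infinite (u ` \<Omega>)\<close>]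
  obtain L c where L: "finite L" "L \<subseteq> u ` \<Omega>" "\<exists>t\<in>L. c t \<noteq> 0"
    and rel: "\<And>g. g \<in> RNN rho \<Omega> Ns \<Longrightarrow> (\<Sum>t\<in>L. c t * g (xp t) 0) = 0"
    by blast
  have "\<forall>t\<in>L. xp t \<in> \<Omega> \<and> u (xp t) = t"
    using xp L(2) by blast
  then have "(\<Sum>t\<in>L. c t * rho (a * t + b)) = 0" for a b
    using rel[OF ridge[of a b]] by (simp add: ridge_fun_def cong: sum.cong)
  then show ?thesis
    using L that unfolding affine_relation_def by blast
qed

theorem propositionC6:
  fixes rho :: "real \<Rightarrow> real" and Ns :: "nat list" and \<Omega> :: "(real^'d::finite) set"
  assumes "length Ns \<ge> 2"
    and "\<forall>n\<in>set Ns. n > 0"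
    and "continuous_on UNIV rho"
    and "\<exists>x0 D. (rho has_real_derivative D) (at x0) \<and> D \<noteq> 0"
    and "interior \<Omega> \<noteq> {}"
    and "\<not> (\<exists>F. F \<subseteq> RNN rho \<Omega> Ns \<and> infinite F \<and> lin_indep_on \<Omega> F)"
  shows "\<exists>p :: real poly. \<forall>x. rho x = poly p x"
proof (cases "\<exists>p q. rho p \<noteq> rho q")
  case True
  then obtain p q where "rho p \<noteq> rho q"
    by blast
  from finite_rank_RNN_imp_affine_relation[OF assms(1-3) this assms(5,6)]
  obtain L c t0 where "finite L" "t0 \<in> L" "c t0 \<noteq> 0" "affine_relation L c rho" .
  then show ?thesis
    using affine_relation_imp_polynomial assms(3) by blast
next
  case False
  then have "\<forall>x. rho x = poly [:rho 0:] x"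
    by auto
  then show ?thesis
    by blast
qed

end
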